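(* Let $m\ge2$, $n\ge1$, and let $\rho:BS(1,m)\to T_n(\mathbb Z[1/m])$ be a special representation. Then $\rho(BS(1,m))$ has the congruence subgroup property.
   Context: $BS(1,m)=\langle a,t\mid tat^{-1}=a^m\rangle$ and $A_m$ is the normal subgroup generated by $a$. $T_n(\mathbb Z[1/m])$ is the group of invertible upper triangular $n\times n$ matrices over $\mathbb Z[1/m]$, $U_n(\mathbb Z[1/m])$ its subgroup of matrices with all diagonal entries $1$. A special representation is an injective homomorphism $\rho:BS(1,m)\to T_n(\mathbb Z[1/m])$ with $\rho(A_m)\subseteq U_n(\mathbb Z[1/m])$. For a subgroup $G\le GL_n(\mathbb Z[1/m])$ and an integer $N>0$ coprime to $m$, the congruence subgroup $G(N)$ is $G\cap\ker\big(GL_n(\mathbb Z[1/m])\to GL_n(\mathbb Z/N\mathbb Z)\big)$ (reduction modulo $N$, using $\mathbb Z[1/m]/N\mathbb Z[1/m]\cong\mathbb Z/N\mathbb Z$). $G$ has the congruence subgroup property (CSP) if every finite-index subgroup of $G$ contains $G(N)$ for some $N>0$ coprime to $m$. *)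

theory Defs
  imports "Jordan_Normal_Form.Matrix" "HOL-Algebra.Generated_Groups" "HOL-Algebra.Coset"
begin

definition Zinv :: "nat \<Rightarrow> rat set" where
  "Zinv m = {of_int a / of_nat m ^ k | a k. True}"

definition over_Zinv :: "nat \<Rightarrow> rat mat \<Rightarrow> bool" where
  "over_Zinv m A = (\<forall>i<dim_row A. \<forall>j<dim_col A. A $$ (i,j) \<in> Zinv m)"

definition GL_Zinv :: "nat \<Rightarrow> nat \<Rightarrow> rat mat set" where
  "GL_Zinv m n = {A \<in> carrier_mat n n. over_Zinv m A \<and>
      (\<exists>B \<in> carrier_mat n n. over_Zinv m B \<and> A * B = 1\<^sub>m n \<and> B * A = 1\<^sub>m n)}"

definition GL_group :: "nat \<Rightarrow> nat \<Rightarrow> rat mat monoid" where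
  "GL_group m n = \<lparr>carrier = GL_Zinv m n, mult = (*), one = 1\<^sub>m n\<rparr>"

definition T_Zinv :: "nat \<Rightarrow> nat \<Rightarrow> rat mat set" where
  "T_Zinv m n = {A \<in> GL_Zinv m n. upper_triangular A}"

definition U_Zinv :: "nat \<Rightarrow> nat \<Rightarrow> rat mat set" where
  "U_Zinv m n = {A \<in> T_Zinv m n. \<forall>i<n. A $$ (i,i) = 1}"

definition cong_subgroup :: "nat \<Rightarrow> nat \<Rightarrow> rat mat set \<Rightarrow> nat \<Rightarrow> rat mat set" where
  "cong_subgroup m n G N = {A \<in> G. \<forall>i<n. \<forall>j<n.
      \<exists>z \<in> Zinv m. A $$ (i,j) - (1\<^sub>m n :: rat mat) $$ (i,j) = of_nat N * z}"

definition has_CSP :: "nat \<Rightarrow> nat \<Rightarrow> rat mat set \<Rightarrow> bool" where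
  "has_CSP m n G = (\<forall>H. subgroup H ((GL_group m n)\<lparr>carrier := G\<rparr>)
        \<and> finite {H #>\<^bsub>GL_group m n\<^esub> g | g. g \<in> G}
      \<longrightarrow> (\<exists>N>0. coprime N m \<and> cong_subgroup m n G N \<subseteq> H))"

(* Concrete model of BS(1,m) = <a,t | t a t^-1 = a^m>: the affine group of Q
   generated by a: x \<mapsto> x+1 and t: x \<mapsto> m x, i.e. the maps
   x \<mapsto> m^k x + b with k \<in> Z, b \<in> Z[1/m]; the pair (k,b) encodes this map
   and multiplication is composition. *)
definition BS_mult :: "nat \<Rightarrow> int \<times> rat \<Rightarrow> int \<times> rat \<Rightarrow> int \<times> rat" where
  "BS_mult m x y = (fst x + fst y, of_nat m powi fst x * snd y + snd x)"

definition BS :: "nat \<Rightarrow> (int \<times> rat) monoid" where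
  "BS m = \<lparr>carrier = UNIV \<times> Zinv m, mult = BS_mult m, one = (0, 0)\<rparr>"

definition BS_a :: "int \<times> rat" where "BS_a = (0, 1)"
definition BS_t :: "int \<times> rat" where "BS_t = (1, 0)"

definition BS_A :: "nat \<Rightarrow> (int \<times> rat) set" where
  "BS_A m = generate (BS m) {g \<otimes>\<^bsub>BS m\<^esub> BS_a \<otimes>\<^bsub>BS m\<^esub> inv\<^bsub>BS m\<^esub> g | g. g \<in> carrier (BS m)}"

(* sanity check of the defining relation t a t^{-1} = a^m *)
lemma BS_relation:
  assumes "m \<ge> 1"
  shows "BS_mult m (BS_mult m BS_t BS_a) (-1, 0) = ((BS_mult m BS_a) ^^ m) (0,0)"
proof -
  have "((BS_mult m BS_a) ^^ k) (0,0) = (0, of_nat k)" for k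
    by (induction k) (auto simp: BS_mult_def BS_a_def)
  then show ?thesis using assms by (simp add: BS_mult_def BS_a_def BS_t_def)
qed

definition special_rep :: "nat \<Rightarrow> nat \<Rightarrow> (int \<times> rat \<Rightarrow> rat mat) \<Rightarrow> bool" where
  "special_rep m n \<rho> = (\<rho> \<in> hom (BS m) (GL_group m n) \<and> inj_on \<rho> (carrier (BS m))
      \<and> \<rho> ` carrier (BS m) \<subseteq> T_Zinv m n \<and> \<rho> ` BS_A m \<subseteq> U_Zinv m n)"

end

(*
  Let H have finite index in G = rho(BS(1,m)), where t = (1,0) and a = (0,1).  By pigeonhole H
  contains rho(t^j) and rho(a^c) for some j, c > 0.  Conjugation by powers of t^j makes
  {b. rho(a^b) : H} a Z[1/m]-module, so dividing c by its common factors with m shows that H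
  contains rho(a^(N z) t^k) whenever j divides k and z : Z[1/m], for some N coprime to m.

  Conversely, let (i, i + s) be a position on the first superdiagonal on which rho(A_m) is not
  the identity.  There rho(a^b) has entry b x0 with x0 <> 0, and the relation t a t^-1 = a^m
  forces the diagonal entries of rho(t) to satisfy d_i = m d_(i+s).  If rho(a^b t^k) is congruent
  to 1 modulo N' = N (m - 1) p (m^j - 1), with p x0^-1 : Z[1/m] and p coprime to m, then
  d_i^k and d_(i+s)^k are congruent to 1, hence m^k is, so j divides k; and the commutator of
  rho(t) with it, which is rho(a^((m - 1) b)), is congruent to 1, which forces b : N Z[1/m].
*)
theory Submission
  imports Defs
begin

section \<open>The ring Z[1/m]\<close>

lemma Zinv_of_int [simp]: "of_int a \<in> Zinv m"
  unfolding Zinv_def by (rule CollectI, rule exI[of _ a], rule exI[of _ 0]) simp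

lemma Zinv_of_nat [simp]: "of_nat a \<in> Zinv m"
  using Zinv_of_int[of "int a" m] by simp

lemma Zinv_0 [simp]: "0 \<in> Zinv m" and Zinv_1 [simp]: "1 \<in> Zinv m"
  using Zinv_of_int[of 0 m] Zinv_of_int[of 1 m] by auto

lemma ZinvE:
  assumes "x \<in> Zinv m"
  obtains a k where "x = of_int a / of_nat m ^ k"
  using assms unfolding Zinv_def by auto

lemma ZinvI: "x = of_int a / of_nat m ^ k \<Longrightarrow> x \<in> Zinv m"
  unfolding Zinv_def by auto

lemma Zinv_add:
  assumes "m > 0" "x \<in> Zinv m" "y \<in> Zinv m"
  shows "x + y \<in> Zinv m"
proof -
  obtain a k b l where x: "x = of_int a / of_nat m ^ k" and y: "y = of_int b / of_nat m ^ l"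
    using assms(2,3) by (elim ZinvE)
  have "x + y = of_int (a * int m ^ l + b * int m ^ k) / of_nat m ^ (k + l)"
    using assms(1) unfolding x y by (simp add: field_simps power_add)
  then show ?thesis by (rule ZinvI)
qed

lemma Zinv_mult:
  assumes "x \<in> Zinv m" "y \<in> Zinv m"
  shows "x * y \<in> Zinv m"
proof -
  obtain a k b l where "x = of_int a / of_nat m ^ k" "y = of_int b / of_nat m ^ l"
    using assms by (elim ZinvE)
  then have "x * y = of_int (a * b) / of_nat m ^ (k + l)"
    by (simp add: power_add)
  then show ?thesis by (rule ZinvI)
qed

lemma Zinv_uminus: "x \<in> Zinv m \<Longrightarrow> - x \<in> Zinv m"
  by (elim ZinvE) (auto intro: ZinvI[of _ "- _"])

lemma Zinv_diff: "m > 0 \<Longrightarrow> x \<in> Zinv m \<Longrightarrow> y \<in> Zinv m \<Longrightarrow> x - y \<in> Zinv m"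
  using Zinv_add[of m x "- y"] Zinv_uminus[of y m] by simp

lemma Zinv_sum: "m > 0 \<Longrightarrow> (\<And>i. i \<in> A \<Longrightarrow> f i \<in> Zinv m) \<Longrightarrow> sum f A \<in> Zinv m"
  by (induction A rule: infinite_finite_induct) (auto intro: Zinv_add)

lemma Zinv_power_int:
  assumes "m > 0"
  shows "of_nat m powi k \<in> Zinv m"
proof (cases "k \<ge> 0")
  case True
  then have "of_nat m powi k = (of_nat (m ^ nat k) :: rat)"
    by (simp add: power_int_def)
  then show ?thesis by (metis Zinv_of_nat)
next
  case False
  then have "of_nat m powi k = of_int 1 / (of_nat m :: rat) ^ nat (- k)"
    by (simp add: power_int_def field_simps)
  then show ?thesis by (rule ZinvI)
qed

lemma Zinv_inverse_of_dvd:
  assumes "m > 0" "g dvd m"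
  shows "1 / of_nat g \<in> Zinv m"
proof -
  obtain q where q: "m = g * q" using assms(2) by blast
  with assms(1) have "1 / (of_nat g :: rat) = of_int (int q) / of_nat m ^ 1"
    by (simp add: field_simps)
  then show ?thesis by (rule ZinvI)
qed

lemma Zinv_additive_imp_linear:
  assumes "m > 0" and additive: "\<And>x y. x \<in> Zinv m \<Longrightarrow> y \<in> Zinv m \<Longrightarrow> f (x + y) = f x + f y"
    and "c \<in> Zinv m"
  shows "f c = c * f 1"
proof -
  have nat_mult: "f (of_nat k * u) = of_nat k * f u" if u: "u \<in> Zinv m" for k u
  proof (induction k)
    case 0
    show ?case using additive[of 0 0] by simp
  next
    case (Suc k)
    have "f (of_nat (Suc k) * u) = f (of_nat k * u + u)" by (simp add: algebra_simps)
    also have "\<dots> = f (of_nat k * u) + f u" using u by (intro additive Zinv_mult) simp_all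
    finally show ?case using Suc by (simp add: algebra_simps)
  qed
  have int_mult: "f (of_int a * u) = of_int a * f u" if u: "u \<in> Zinv m" for a u
  proof (cases "a \<ge> 0")
    case True
    then show ?thesis using nat_mult[OF u, of "nat a"] by simp
  next
    case False
    have "f (of_int a * u) + f (of_nat (nat (- a)) * u) = f 0"
      using False u additive[of "of_int a * u" "of_nat (nat (- a)) * u"] by (simp add: Zinv_mult Zinv_uminus)
    then show ?thesis using False nat_mult[OF u, of "nat (- a)"] nat_mult[OF u, of 0] by simp
  qed
  obtain a e where c: "c = of_int a / of_nat m ^ e" using assms(3) by (rule ZinvE)
  define u where "u = 1 / (of_nat m ^ e :: rat)"
  have u: "u \<in> Zinv m" unfolding u_def by (rule ZinvI[of _ 1]) simp
  have "f 1 = of_nat (m ^ e) * f u"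
    using nat_mult[OF u, of "m ^ e"] assms(1) by (simp add: u_def)
  moreover have "f c = of_int a * f u"
    using int_mult[OF u, of a] by (simp add: c u_def)
  ultimately show ?thesis using assms(1) by (simp add: c field_simps)
qed

lemma dvd_of_Zinv_multiple:
  assumes "coprime N m" "m > 0" "w \<in> Zinv m" "of_int y = of_nat N * w"
  shows "int N dvd y"
proof -
  obtain a k where a: "w = of_int a / of_nat m ^ k" using assms(3) by (rule ZinvE)
  with assms(2,4) have "(of_int (y * int m ^ k) :: rat) = of_int (int N * a)"
    by (simp add: field_simps)
  then have "int N dvd y * int m ^ k" by (metis dvd_triv_left of_int_eq_iff)
  moreover have "coprime (int N) (int m ^ k)" using assms(1) by simp
  ultimately show ?thesis by (simp add: coprime_dvd_mult_left_iff)
qed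

lemma ex_coprime_dividing_out:
  fixes c m :: nat
  assumes "P c" "c > 0"
    and closed: "\<And>c g. P c \<Longrightarrow> c > 0 \<Longrightarrow> g dvd c \<Longrightarrow> g dvd m \<Longrightarrow> P (c div g)"
  shows "\<exists>c>0. coprime c m \<and> P c"
  using assms(1,2)
proof (induction c rule: less_induct)
  case (less c)
  show ?case
  proof (cases "coprime c m")
    case False
    define g where "g = gcd c m"
    have "g > 1" using False less.prems(2) unfolding g_def
      by (metis coprime_iff_gcd_eq_1 gcd_pos_nat less_one nat_neq_iff)
    then have "c div g < c" "c div g > 0"
      using less.prems(2) by (auto simp: g_def div_greater_zero_iff)
    moreover have "P (c div g)" using closed less.prems unfolding g_def by simp
    ultimately show ?thesis using less.IH by blast
  qed (use less.prems in blast)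
qed

lemma ex_coprime_mult_inverse_Zinv:
  assumes "m > 0" "x \<in> Zinv m" "x \<noteq> 0"
  shows "\<exists>p>0. coprime p m \<and> of_nat p / x \<in> Zinv m"
proof -
  obtain a k where a: "x = of_int a / of_nat m ^ k" using assms(2) by (rule ZinvE)
  with assms(3) have "a \<noteq> 0" by auto
  with assms(1) have "of_nat (nat \<bar>a\<bar>) / x = of_int (sgn a * int m ^ k)"
    unfolding a by (simp add: field_simps abs_if sgn_if)
  then have "of_nat (nat \<bar>a\<bar>) / x \<in> Zinv m" by (metis Zinv_of_int)
  moreover have "of_nat (p div g) / x \<in> Zinv m"
    if "of_nat p / x \<in> Zinv m" "g dvd p" "g dvd m" for p g
  proof -
    have "of_nat (p div g) / x = (of_nat p / x) * (1 / of_nat g)"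
      using that(2) by (cases "g = 0") (auto elim!: dvdE)
    then show ?thesis using that by (metis Zinv_mult Zinv_inverse_of_dvd[OF assms(1)])
  qed
  ultimately show ?thesis
    using \<open>a \<noteq> 0\<close> by (intro ex_coprime_dividing_out[of "\<lambda>p. of_nat p / x \<in> Zinv m" "nat \<bar>a\<bar>"]) auto
qed

section \<open>Congruences in Z[1/m]\<close>

lemma power_diff_one_dvd_imp_dvd_exponent:
  fixes m :: int and j K :: nat
  assumes "m \<ge> 2" "j > 0" "(m ^ j - 1) dvd (m ^ K - 1)"
  shows "j dvd K"
proof -
  define q r where "q = K div j" and "r = K mod j"
  have "r < j" unfolding r_def using assms(2) by simp
  have "K = j * q + r" unfolding q_def r_def by simp
  then have split: "m ^ K - 1 = m ^ r * ((m ^ j) ^ q - 1) + (m ^ r - 1)"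
    by (simp add: power_add power_mult algebra_simps)
  have "m ^ j - 1 dvd (m ^ j) ^ q - 1"
    using power_diff_1_eq[of "m ^ j" q] by simp
  then have "m ^ j - 1 dvd m ^ r * ((m ^ j) ^ q - 1)" by (rule dvd_mult)
  then have "m ^ j - 1 dvd m ^ r - 1"
    using assms(3) unfolding split by (simp only: dvd_add_right_iff)
  moreover have "m ^ r - 1 < m ^ j - 1" using assms(1) \<open>r < j\<close> by simp
  moreover have "m ^ r \<ge> 1" using assms(1) by simp
  ultimately have "m ^ r = 1"
    using zdvd_not_zless[of "m ^ r - 1" "m ^ j - 1"] by fastforce
  then have "r = 0" using assms(1) one_less_power[of m r] by (cases "r = 0") auto
  then show ?thesis unfolding r_def by (simp add: dvd_eq_mod_eq_0)
qed

definition cong_Zinv :: "nat \<Rightarrow> nat \<Rightarrow> rat \<Rightarrow> rat \<Rightarrow> bool" where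
  "cong_Zinv m N x y \<longleftrightarrow> (\<exists>z\<in>Zinv m. x - y = of_nat N * z)"

lemma cong_Zinv_refl [simp]: "cong_Zinv m N x x"
  unfolding cong_Zinv_def by (auto intro: bexI[of _ 0])

lemma cong_Zinv_sym: "cong_Zinv m N x y \<Longrightarrow> cong_Zinv m N y x"
  unfolding cong_Zinv_def by (metis Zinv_uminus minus_diff_eq mult_minus_right)

lemma cong_Zinv_add:
  "m > 0 \<Longrightarrow> cong_Zinv m N x x' \<Longrightarrow> cong_Zinv m N y y' \<Longrightarrow> cong_Zinv m N (x + y) (x' + y')"
  unfolding cong_Zinv_def by (auto simp: algebra_simps intro!: bexI[OF _ Zinv_add])

lemma cong_Zinv_trans:
  "m > 0 \<Longrightarrow> cong_Zinv m N x y \<Longrightarrow> cong_Zinv m N y z \<Longrightarrow> cong_Zinv m N x z"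
  using cong_Zinv_add[of m N x y y z] unfolding cong_Zinv_def by simp

lemma cong_Zinv_mult:
  assumes "m > 0" "x' \<in> Zinv m" "y \<in> Zinv m" "cong_Zinv m N x x'" "cong_Zinv m N y y'"
  shows "cong_Zinv m N (x * y) (x' * y')"
proof -
  obtain u v where "u \<in> Zinv m" "x - x' = of_nat N * u" "v \<in> Zinv m" "y - y' = of_nat N * v"
    using assms(4,5) unfolding cong_Zinv_def by blast
  then have "x * y - x' * y' = of_nat N * (u * y + x' * v)"
    by (simp add: algebra_simps flip: right_diff_distrib)
  then show ?thesis unfolding cong_Zinv_def
    using assms(1-3) \<open>u \<in> Zinv m\<close> \<open>v \<in> Zinv m\<close> by (blast intro: Zinv_add Zinv_mult)
qed

lemma cong_Zinv_sum:
  "m > 0 \<Longrightarrow> (\<And>i. i \<in> A \<Longrightarrow> cong_Zinv m N (f i) (g i)) \<Longrightarrow> cong_Zinv m N (sum f A) (sum g A)"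
  by (induction A rule: infinite_finite_induct) (auto intro: cong_Zinv_add)

lemma dvd_exponent_if_cong_Zinv_power_one_nat:
  assumes "m \<ge> 2" "j > 0" "(m ^ j - 1) dvd N" "coprime N m"
    and "cong_Zinv m N (of_nat m ^ K) 1"
  shows "j dvd K"
proof -
  obtain w where w: "w \<in> Zinv m" "of_nat m ^ K - 1 = of_nat N * w"
    using assms(5) unfolding cong_Zinv_def by blast
  have "int N dvd int m ^ K - 1"
  proof (rule dvd_of_Zinv_multiple[OF assms(4) _ w(1)])
    show "0 < m" using assms(1) by simp
    show "of_int (int m ^ K - 1) = of_nat N * w" using w(2) by simp
  qed
  moreover have "int m ^ j - 1 dvd int N"
  proof -
    have "m ^ j \<ge> 1" using assms(1) by simp
    then have "int (m ^ j - 1) = int m ^ j - 1" by (simp add: of_nat_diff)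
    then show ?thesis using assms(3) by (metis int_dvd_int_iff)
  qed
  ultimately have "int m ^ j - 1 dvd int m ^ K - 1" by (rule dvd_trans[rotated])
  moreover have "int m \<ge> 2" using assms(1) by simp
  ultimately show ?thesis using power_diff_one_dvd_imp_dvd_exponent assms(2) by blast
qed

lemma dvd_exponent_if_cong_Zinv_power_one:
  fixes k :: int
  assumes "m \<ge> 2" "j > 0" "(m ^ j - 1) dvd N" "coprime N m"
    and "cong_Zinv m N (of_nat m powi k) 1"
  shows "int j dvd k"
proof -
  have m0: "m > 0" using assms(1) by simp
  have "cong_Zinv m N (of_nat m powi (- k) * of_nat m powi k) (of_nat m powi (- k) * 1)"
    by (rule cong_Zinv_mult[OF m0 Zinv_power_int[OF m0] Zinv_power_int[OF m0] cong_Zinv_refl assms(5)])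
  then have "cong_Zinv m N (of_nat m powi (- k)) 1"
    using m0 by (simp add: power_int_minus cong_Zinv_sym)
  then have "cong_Zinv m N (of_nat m ^ nat \<bar>k\<bar>) 1"
    using assms(5) by (cases "k \<ge> 0") (simp_all add: power_int_def)
  then have "j dvd nat \<bar>k\<bar>"
    using assms(1-4) by (rule dvd_exponent_if_cong_Zinv_power_one_nat[rotated 4])
  then have "int j dvd int (nat \<bar>k\<bar>)" by (simp only: int_dvd_int_iff)
  then show ?thesis by simp
qed

section \<open>Matrices over Z[1/m]\<close>

lemma mult_mat_index_sum:
  assumes "A \<in> carrier_mat n n" "B \<in> carrier_mat n n" "i < n" "j < n"
  shows "(A * B) $$ (i, j) = (\<Sum>l<n. A $$ (i, l) * B $$ (l, j))"
  using assms by (auto simp: scalar_prod_def lessThan_atLeast0 intro!: sum.cong)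

lemma over_ZinvD:
  "over_Zinv m A \<Longrightarrow> A \<in> carrier_mat n n \<Longrightarrow> i < n \<Longrightarrow> j < n \<Longrightarrow> A $$ (i, j) \<in> Zinv m"
  unfolding over_Zinv_def by auto

lemma over_Zinv_one [simp]: "over_Zinv m (1\<^sub>m n)"
  unfolding over_Zinv_def by simp

lemma over_Zinv_mult:
  assumes "m > 0" "A \<in> carrier_mat n n" "B \<in> carrier_mat n n" "over_Zinv m A" "over_Zinv m B"
  shows "over_Zinv m (A * B)"
  unfolding over_Zinv_def
proof (intro allI impI)
  fix i j assume "i < dim_row (A * B)" "j < dim_col (A * B)"
  then have "i < n" "j < n" using assms(2,3) by auto
  then show "(A * B) $$ (i, j) \<in> Zinv m"
    using assms unfolding mult_mat_index_sum[OF assms(2,3) \<open>i < n\<close> \<open>j < n\<close>]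
    by (auto intro!: Zinv_sum Zinv_mult intro: over_ZinvD)
qed

definition mat_cong_Zinv :: "nat \<Rightarrow> nat \<Rightarrow> nat \<Rightarrow> rat mat \<Rightarrow> rat mat \<Rightarrow> bool" where
  "mat_cong_Zinv m n N A B \<longleftrightarrow> (\<forall>i<n. \<forall>j<n. cong_Zinv m N (A $$ (i, j)) (B $$ (i, j)))"

lemma cong_subgroup_altdef: "cong_subgroup m n G N = {A \<in> G. mat_cong_Zinv m n N A (1\<^sub>m n)}"
  unfolding cong_subgroup_def mat_cong_Zinv_def cong_Zinv_def by simp

lemma mat_cong_Zinv_refl [simp]: "mat_cong_Zinv m n N A A"
  unfolding mat_cong_Zinv_def by simp

lemma mat_cong_Zinv_sym: "mat_cong_Zinv m n N A B \<Longrightarrow> mat_cong_Zinv m n N B A"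
  unfolding mat_cong_Zinv_def by (simp add: cong_Zinv_sym)

lemma mat_cong_Zinv_mult:
  assumes "m > 0" "A \<in> carrier_mat n n" "A' \<in> carrier_mat n n" "B \<in> carrier_mat n n" "B' \<in> carrier_mat n n"
    and "over_Zinv m A'" "over_Zinv m B" "mat_cong_Zinv m n N A A'" "mat_cong_Zinv m n N B B'"
  shows "mat_cong_Zinv m n N (A * B) (A' * B')"
  unfolding mat_cong_Zinv_def
proof (intro allI impI)
  fix i j assume "i < n" "j < n"
  with assms show "cong_Zinv m N ((A * B) $$ (i, j)) ((A' * B') $$ (i, j))"
    unfolding mult_mat_index_sum[OF assms(2,4) \<open>i < n\<close> \<open>j < n\<close>]
      mult_mat_index_sum[OF assms(3,5) \<open>i < n\<close> \<open>j < n\<close>] mat_cong_Zinv_def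
    by (intro cong_Zinv_sum cong_Zinv_mult) (auto intro: over_ZinvD)
qed

lemma GL_ZinvD:
  assumes "A \<in> GL_Zinv m n"
  shows "A \<in> carrier_mat n n" "over_Zinv m A"
  using assms unfolding GL_Zinv_def by auto

lemma GL_ZinvI:
  "A \<in> carrier_mat n n \<Longrightarrow> over_Zinv m A \<Longrightarrow> B \<in> carrier_mat n n \<Longrightarrow> over_Zinv m B \<Longrightarrow>
    A * B = 1\<^sub>m n \<Longrightarrow> B * A = 1\<^sub>m n \<Longrightarrow> A \<in> GL_Zinv m n"
  unfolding GL_Zinv_def by blast

lemma group_GL_group:
  assumes "m > 0"
  shows "group (GL_group m n)"
proof (rule groupI)
  fix A B assume "A \<in> carrier (GL_group m n)" "B \<in> carrier (GL_group m n)"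
  then obtain A' B' where A: "A \<in> carrier_mat n n" "over_Zinv m A" "A' \<in> carrier_mat n n"
      "over_Zinv m A'" "A * A' = 1\<^sub>m n" "A' * A = 1\<^sub>m n"
    and B: "B \<in> carrier_mat n n" "over_Zinv m B" "B' \<in> carrier_mat n n"
      "over_Zinv m B'" "B * B' = 1\<^sub>m n" "B' * B = 1\<^sub>m n"
    by (auto simp: GL_group_def GL_Zinv_def)
  have inverse: "(X * Y) * (Y' * X') = 1\<^sub>m n"
    if "X \<in> carrier_mat n n" "Y \<in> carrier_mat n n" "Y' \<in> carrier_mat n n" "X' \<in> carrier_mat n n"
      "X * X' = 1\<^sub>m n" "Y * Y' = 1\<^sub>m n" for X Y X' Y' :: "rat mat"
  proof -
    have "(X * Y) * (Y' * X') = X * (Y * (Y' * X'))"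
      using that by (simp add: assoc_mult_mat[of _ n n _ n _ n])
    also have "Y * (Y' * X') = (Y * Y') * X'"
      using that by (metis assoc_mult_mat)
    finally show ?thesis using that by (simp add: left_mult_one_mat[OF that(4)])
  qed
  have "(A * B) * (B' * A') = 1\<^sub>m n" "(B' * A') * (A * B) = 1\<^sub>m n"
    using inverse A B by blast+
  then show "A \<otimes>\<^bsub>GL_group m n\<^esub> B \<in> carrier (GL_group m n)"
    using A B assms unfolding GL_group_def
    by (simp add: GL_ZinvI[of "A * B" n m "B' * A'"] over_Zinv_mult)
next
  fix A assume "A \<in> carrier (GL_group m n)"
  then obtain A' where "A' \<in> carrier_mat n n" "over_Zinv m A'" "A * A' = 1\<^sub>m n" "A' * A = 1\<^sub>m n"
    by (auto simp: GL_group_def GL_Zinv_def)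
  then show "\<exists>B\<in>carrier (GL_group m n). B \<otimes>\<^bsub>GL_group m n\<^esub> A = \<one>\<^bsub>GL_group m n\<^esub>"
    using \<open>A \<in> carrier (GL_group m n)\<close> GL_ZinvD[of A m n]
    by (auto simp: GL_group_def intro!: bexI[of _ A'] GL_ZinvI[of A' n m A])
qed (auto simp: GL_group_def GL_Zinv_def intro: assoc_mult_mat)

lemma normal_cong_subgroup_GL:
  assumes "m > 0"
  shows "cong_subgroup m n (GL_Zinv m n) N \<lhd> GL_group m n"
proof -
  interpret GL: group "GL_group m n" by (rule group_GL_group[OF assms])
  let ?K = "cong_subgroup m n (GL_Zinv m n) N"
  have carrier: "A \<in> carrier_mat n n" "over_Zinv m A" if "A \<in> carrier (GL_group m n)" for A
    using that GL_ZinvD by (auto simp: GL_group_def)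
  have mult: "mat_cong_Zinv m n N (A \<otimes>\<^bsub>GL_group m n\<^esub> B) (A' \<otimes>\<^bsub>GL_group m n\<^esub> B')"
    if "A \<in> carrier (GL_group m n)" "A' \<in> carrier (GL_group m n)"
      "B \<in> carrier (GL_group m n)" "B' \<in> carrier (GL_group m n)"
      "mat_cong_Zinv m n N A A'" "mat_cong_Zinv m n N B B'" for A A' B B'
    using that carrier[OF that(1)] carrier[OF that(2)] carrier[OF that(3)] carrier[OF that(4)]
    by (simp add: GL_group_def mat_cong_Zinv_mult[OF assms])
  have K: "?K = {A \<in> carrier (GL_group m n). mat_cong_Zinv m n N A \<one>\<^bsub>GL_group m n\<^esub>}"
    by (simp add: cong_subgroup_altdef GL_group_def)
  show ?thesis
    unfolding GL.normal_inv_iff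
  proof (intro conjI ballI GL.subgroupI)
    fix A B assume "A \<in> ?K" "B \<in> ?K"
    then show "A \<otimes>\<^bsub>GL_group m n\<^esub> B \<in> ?K"
      using mult[of A "\<one>\<^bsub>GL_group m n\<^esub>" B "\<one>\<^bsub>GL_group m n\<^esub>"] unfolding K by simp
  next
    fix A assume "A \<in> ?K"
    then show "inv\<^bsub>GL_group m n\<^esub> A \<in> ?K"
      using mult[of "inv\<^bsub>GL_group m n\<^esub> A" "inv\<^bsub>GL_group m n\<^esub> A" "\<one>\<^bsub>GL_group m n\<^esub>" A]
      unfolding K by (simp add: mat_cong_Zinv_sym)
  next
    fix A B assume "A \<in> carrier (GL_group m n)" "B \<in> ?K"
    then show "A \<otimes>\<^bsub>GL_group m n\<^esub> B \<otimes>\<^bsub>GL_group m n\<^esub> inv\<^bsub>GL_group m n\<^esub> A \<in> ?K"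
      using mult[of A A B "\<one>\<^bsub>GL_group m n\<^esub>"]
        mult[of "A \<otimes>\<^bsub>GL_group m n\<^esub> B" A "inv\<^bsub>GL_group m n\<^esub> A" "inv\<^bsub>GL_group m n\<^esub> A"]
      unfolding K by simp
  qed (auto simp: K)
qed

lemma upper_triangular_below_diag:
  "A \<in> carrier_mat n n \<Longrightarrow> upper_triangular A \<Longrightarrow> c < r \<Longrightarrow> r < n \<Longrightarrow> A $$ (r, c) = 0"
  by (auto simp: upper_triangular_def)

lemma upper_triangular_mult_diag:
  assumes "A \<in> carrier_mat n n" "B \<in> carrier_mat n n" "upper_triangular A" "upper_triangular B" "i < n"
  shows "(A * B) $$ (i, i) = A $$ (i, i) * B $$ (i, i)"
proof -
  have "(A * B) $$ (i, i) = (\<Sum>l<n. A $$ (i, l) * B $$ (l, i))"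
    by (rule mult_mat_index_sum[OF assms(1,2,5,5)])
  also have "\<dots> = (\<Sum>l\<in>{i}. A $$ (i, l) * B $$ (l, i))"
  proof (intro sum.mono_neutral_right ballI)
    fix l assume "l \<in> {..<n} - {i}"
    then consider "l < i" | "i < l" "l < n" by fastforce
    then show "A $$ (i, l) * B $$ (l, i) = 0"
      by cases (use assms upper_triangular_below_diag[of A n] upper_triangular_below_diag[of B n] in auto)
  qed (use assms in auto)
  finally show ?thesis by simp
qed

lemma upper_triangular_mult_entry_gap:
  assumes "A \<in> carrier_mat n n" "B \<in> carrier_mat n n" "upper_triangular A" "upper_triangular B"
    and "i < e" "e < n" "\<And>l. i < l \<Longrightarrow> l < e \<Longrightarrow> A $$ (i, l) = 0 \<or> B $$ (l, e) = 0"
  shows "(A * B) $$ (i, e) = A $$ (i, i) * B $$ (i, e) + A $$ (i, e) * B $$ (e, e)"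
proof -
  have "(A * B) $$ (i, e) = (\<Sum>l<n. A $$ (i, l) * B $$ (l, e))"
    using assms by (intro mult_mat_index_sum) auto
  also have "\<dots> = (\<Sum>l\<in>{i, e}. A $$ (i, l) * B $$ (l, e))"
  proof (intro sum.mono_neutral_right ballI)
    fix l assume "l \<in> {..<n} - {i, e}"
    then consider "l < i" | "i < l" "l < e" | "e < l" "l < n" by fastforce
    then show "A $$ (i, l) * B $$ (l, e) = 0"
    proof cases
      case 2
      then show ?thesis using assms(7)[OF 2] by auto
    qed (use assms upper_triangular_below_diag[of A n l i] upper_triangular_below_diag[of B n e l] in auto)
  qed (use assms in auto)
  finally show ?thesis using assms(5) by simp
qed

section \<open>The Baumslag-Solitar group\<close>

lemma carrier_BS [simp]: "(k, b) \<in> carrier (BS m) \<longleftrightarrow> b \<in> Zinv m"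
  by (simp add: BS_def)

lemma one_BS [simp]: "\<one>\<^bsub>BS m\<^esub> = (0, 0)"
  by (simp add: BS_def)

lemma mult_BS [simp]: "(k, b) \<otimes>\<^bsub>BS m\<^esub> (l, c) = (k + l, of_nat m powi k * c + b)"
  by (simp add: BS_def BS_mult_def)

lemma group_BS:
  assumes "m > 0"
  shows "group (BS m)"
proof (rule groupI)
  fix x y assume "x \<in> carrier (BS m)" "y \<in> carrier (BS m)"
  then show "x \<otimes>\<^bsub>BS m\<^esub> y \<in> carrier (BS m)"
    using assms by (cases x, cases y) (auto intro!: Zinv_add Zinv_mult Zinv_power_int)
next
  fix x y z assume "x \<in> carrier (BS m)" "y \<in> carrier (BS m)" "z \<in> carrier (BS m)"
  then show "x \<otimes>\<^bsub>BS m\<^esub> y \<otimes>\<^bsub>BS m\<^esub> z = x \<otimes>\<^bsub>BS m\<^esub> (y \<otimes>\<^bsub>BS m\<^esub> z)"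
    using assms by (cases x, cases y, cases z) (simp add: power_int_add algebra_simps)
next
  fix x assume "x \<in> carrier (BS m)"
  then obtain k b where x: "x = (k, b)" "b \<in> Zinv m" by (cases x) auto
  have "- (of_nat m powi (- k) * b) \<in> Zinv m"
    using x(2) assms by (intro Zinv_uminus Zinv_mult Zinv_power_int)
  moreover have "(- k, - (of_nat m powi (- k) * b)) \<otimes>\<^bsub>BS m\<^esub> x = \<one>\<^bsub>BS m\<^esub>"
    using assms by (simp add: x)
  ultimately show "\<exists>y\<in>carrier (BS m). y \<otimes>\<^bsub>BS m\<^esub> x = \<one>\<^bsub>BS m\<^esub>" by force
qed (simp_all add: BS_def BS_mult_def)

lemma inv_BS:
  assumes "m > 0" "b \<in> Zinv m"
  shows "inv\<^bsub>BS m\<^esub> (k, b) = (- k, - (of_nat m powi (- k) * b))"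
  using assms by (intro group.inv_equality[OF group_BS])
    (auto intro!: Zinv_uminus Zinv_mult Zinv_power_int)

lemma pow_BS_translation:
  assumes "m > 0" "b \<in> Zinv m"
  shows "(0, b) [^]\<^bsub>BS m\<^esub> (l :: int) = (0, of_int l * b)"
proof -
  have nat_pow: "(0, b) [^]\<^bsub>BS m\<^esub> (n :: nat) = (0, of_nat n * b)" for n
    by (induction n) (simp_all add: algebra_simps)
  show ?thesis
    using assms by (simp add: int_pow_def2 nat_pow inv_BS Zinv_mult Zinv_uminus)
qed

lemma pow_BS_dilation:
  assumes "m > 0"
  shows "(k, 0) [^]\<^bsub>BS m\<^esub> (l :: int) = (l * k, 0)"
proof -
  have nat_pow: "(k, 0) [^]\<^bsub>BS m\<^esub> (n :: nat) = (int n * k, 0)" for n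
    by (induction n) (simp_all add: algebra_simps)
  show ?thesis
    using assms by (simp add: int_pow_def2 nat_pow inv_BS)
qed

lemma conj_BS_translation:
  assumes "m > 0"
  shows "(k, 0) \<otimes>\<^bsub>BS m\<^esub> (0, y) \<otimes>\<^bsub>BS m\<^esub> inv\<^bsub>BS m\<^esub> (k, 0) = (0, of_nat m powi k * y)"
  using assms by (simp add: inv_BS)

lemma commutator_BS:
  assumes "m > 0" "b \<in> Zinv m"
  shows "(1, 0) \<otimes>\<^bsub>BS m\<^esub> (k, b) \<otimes>\<^bsub>BS m\<^esub> inv\<^bsub>BS m\<^esub> (1, 0) \<otimes>\<^bsub>BS m\<^esub> inv\<^bsub>BS m\<^esub> (k, b)
    = (0, (of_nat m - 1) * b)"
  using assms by (simp add: inv_BS power_int_minus power_int_add field_simps)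

lemma translation_in_BS_A:
  assumes "m > 0" "b \<in> Zinv m"
  shows "(0, b) \<in> BS_A m"
proof -
  interpret BS: group "BS m" by (rule group_BS[OF assms(1)])
  let ?gens = "{g \<otimes>\<^bsub>BS m\<^esub> BS_a \<otimes>\<^bsub>BS m\<^esub> inv\<^bsub>BS m\<^esub> g | g. g \<in> carrier (BS m)}"
  have "BS_a \<in> carrier (BS m)" by (simp add: BS_a_def)
  then have "?gens \<subseteq> carrier (BS m)" using BS.m_closed BS.inv_closed by blast
  then have subgroup: "subgroup (BS_A m) (BS m)"
    unfolding BS_A_def by (rule BS.generate_is_subgroup)
  obtain a e where b: "b = of_int a / of_nat m ^ e" using assms(2) by (rule ZinvE)
  have "(0, of_nat m powi (- int e)) =
      (- int e, 0) \<otimes>\<^bsub>BS m\<^esub> BS_a \<otimes>\<^bsub>BS m\<^esub> inv\<^bsub>BS m\<^esub> (- int e, 0)"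
    using conj_BS_translation[OF assms(1), of "- int e" 1] by (simp add: BS_a_def)
  moreover have "(- int e, 0 :: rat) \<in> carrier (BS m)" by simp
  ultimately have "(0, of_nat m powi (- int e)) \<in> ?gens" by blast
  then have "(0, of_nat m powi (- int e)) \<in> BS_A m"
    unfolding BS_A_def by (rule generate.incl)
  then have "(0, of_nat m powi (- int e)) [^]\<^bsub>BS m\<^esub> a \<in> BS_A m"
    by (rule BS.subgroup_int_pow_closed[OF subgroup])
  moreover have "(0, of_nat m powi (- int e)) [^]\<^bsub>BS m\<^esub> a = (0, b)"
    using pow_BS_translation[OF assms(1) Zinv_power_int[OF assms(1)], of "- int e" a]
    by (simp add: b power_int_minus divide_inverse)
  ultimately show ?thesis by simp
qed

lemma BS_subgroup_translations_Zinv_closed: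
  assumes "m > 0" "subgroup K (BS m)" "j > 0" "(int j, 0) \<in> K" "(0, b) \<in> K" "z \<in> Zinv m"
  shows "(0, z * b) \<in> K"
proof -
  interpret BS: group "BS m" by (rule group_BS[OF assms(1)])
  have b: "b \<in> Zinv m" using subgroup.subset[OF assms(2)] assms(5) by auto
  obtain a e where z: "z = of_int a / of_nat m ^ e" using assms(6) by (rule ZinvE)
  \<comment> \<open>\<open>z = a m^((j - 1) e) / m^(j e)\<close>: multiply by an integer, then conjugate by \<open>t^(-j e)\<close>.\<close>
  define c where "c = a * int m ^ ((j - 1) * e)"
  have "(0, b) [^]\<^bsub>BS m\<^esub> c \<in> K" by (rule BS.subgroup_int_pow_closed[OF assms(2,5)])
  then have c: "(0, of_int c * b) \<in> K" by (simp add: pow_BS_translation[OF assms(1) b])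
  have "(int j, 0) [^]\<^bsub>BS m\<^esub> (- int e) \<in> K" by (rule BS.subgroup_int_pow_closed[OF assms(2,4)])
  then have t: "(- (int j * int e), 0) \<in> K" by (simp add: pow_BS_dilation[OF assms(1)] mult.commute)
  have "(- (int j * int e), 0) \<otimes>\<^bsub>BS m\<^esub> (0, of_int c * b) \<otimes>\<^bsub>BS m\<^esub>
      inv\<^bsub>BS m\<^esub> (- (int j * int e), 0) \<in> K"
    using t c by (intro subgroup.m_closed[OF assms(2)] subgroup.m_inv_closed[OF assms(2)])
  moreover have "of_nat m powi (- (int j * int e)) * (of_int c * b) = z * b"
  proof -
    have "j * e = (j - 1) * e + e" using assms(3) by (cases j) auto
    then have "(of_nat m :: rat) ^ (j * e) = of_nat m ^ ((j - 1) * e) * of_nat m ^ e"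
      by (simp add: power_add)
    then show ?thesis
      using assms(1) unfolding c_def z by (simp add: power_int_minus field_simps flip: of_nat_mult)
  qed
  ultimately show ?thesis by (simp only: conj_BS_translation[OF assms(1)])
qed

lemma BS_subgroup_contains_congruence_part:
  assumes "m > 0" "subgroup K (BS m)" "j > 0" "(int j, 0) \<in> K" "c > 0" "(0, of_nat c) \<in> K"
  shows "\<exists>N>0. coprime N m \<and> (\<forall>k z. int j dvd k \<longrightarrow> z \<in> Zinv m \<longrightarrow> (k, of_nat N * z) \<in> K)"
proof -
  interpret BS: group "BS m" by (rule group_BS[OF assms(1)])
  have scale: "(0, z * of_nat N) \<in> K" if "(0, of_nat N) \<in> K" "z \<in> Zinv m" for N z
    using BS_subgroup_translations_Zinv_closed[OF assms(1-4) that] .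
  have "(0, of_nat (N div g)) \<in> K" if "(0, of_nat N) \<in> K" "g dvd N" "g dvd m" for N g
    using scale[OF that(1) Zinv_inverse_of_dvd[OF assms(1) that(3)]] that(2)
    by (cases "g = 0") (auto elim!: dvdE)
  then obtain N where N: "N > 0" "coprime N m" "(0, of_nat N) \<in> K"
    using ex_coprime_dividing_out[of "\<lambda>N. (0, of_nat N) \<in> K" c m] assms(5,6) by blast
  have "(k, of_nat N * z) \<in> K" if k: "int j dvd k" and z: "z \<in> Zinv m" for k z
  proof -
    obtain l where l: "k = l * int j" using k by (metis dvd_def mult.commute)
    have "(int j, 0) [^]\<^bsub>BS m\<^esub> l \<in> K" by (rule BS.subgroup_int_pow_closed[OF assms(2,4)])
    then have "(k, 0) \<in> K" by (simp add: pow_BS_dilation[OF assms(1)] l)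
    with scale[OF N(3) z] have "(0, z * of_nat N) \<otimes>\<^bsub>BS m\<^esub> (k, 0) \<in> K"
      by (rule subgroup.m_closed[OF assms(2)])
    then show ?thesis by (simp add: mult.commute)
  qed
  with N(1,2) show ?thesis by blast
qed

section \<open>Subgroups of finite index\<close>

lemma (in group) ex_pow_in_subgroup_of_finite_index:
  assumes "subgroup H G" "finite (rcosets H)" "x \<in> carrier G"
  shows "\<exists>j::nat>0. x [^] j \<in> H"
proof -
  have "range (\<lambda>i::nat. H #> x [^] i) \<subseteq> rcosets H"
    using assms(3) subgroup.subset[OF assms(1)] by (auto intro!: rcosetsI)
  then have "\<not> inj (\<lambda>i::nat. H #> x [^] i)"
    using assms(2) finite_subset infinite_UNIV_nat finite_imageD by blast
  then obtain i i' :: nat where "i < i'" "H #> x [^] i = H #> x [^] i'"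
    unfolding inj_def by (metis linorder_neqE_nat)
  then have "x [^] i' \<in> H #> x [^] i"
    using assms(1,3) by (simp add: rcos_self)
  then have "x [^] i' \<otimes> inv (x [^] i) \<in> H"
    using assms(1,3) by (simp add: subgroup.rcos_module_imp[OF _ is_group])
  moreover have "x [^] i' = x [^] (i' - i) \<otimes> x [^] i"
    using assms(3) \<open>i < i'\<close> by (simp add: nat_pow_mult)
  ultimately have "x [^] (i' - i) \<in> H"
    using assms(3) by (simp add: m_assoc)
  then show ?thesis using \<open>i < i'\<close> by (intro exI[of _ "i' - i"]) simp
qed

lemma (in group_hom) subgroup_vimage:
  assumes "subgroup K H"
  shows "subgroup (carrier G \<inter> h -` K) G"
  using assms by (intro G.subgroupI) (auto simp: subgroup.m_closed subgroup.m_inv_closed subgroup.one_closed)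

section \<open>Special representations\<close>

locale special_representation =
  fixes m n :: nat and \<rho> :: "int \<times> rat \<Rightarrow> rat mat"
  assumes m_ge_2: "m \<ge> 2" and special: "special_rep m n \<rho>"
begin

lemma m_pos: "m > 0"
  using m_ge_2 by simp

sublocale rep: group_hom "BS m" "GL_group m n" \<rho>
  using group_BS[OF m_pos] group_GL_group[OF m_pos] special
  by (simp add: group_hom_def group_hom_axioms_def special_rep_def)

lemma rep_mult:
  "x \<in> carrier (BS m) \<Longrightarrow> y \<in> carrier (BS m) \<Longrightarrow> \<rho> (x \<otimes>\<^bsub>BS m\<^esub> y) = \<rho> x * \<rho> y"
  using rep.hom_mult by (simp add: GL_group_def)

lemma rep_GL: "x \<in> carrier (BS m) \<Longrightarrow> \<rho> x \<in> GL_Zinv m n"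
  using rep.hom_closed by (simp add: GL_group_def)

lemma rep_carrier_mat: "x \<in> carrier (BS m) \<Longrightarrow> \<rho> x \<in> carrier_mat n n"
  by (rule GL_ZinvD(1)[OF rep_GL])

lemma rep_entry_Zinv: "x \<in> carrier (BS m) \<Longrightarrow> i < n \<Longrightarrow> j < n \<Longrightarrow> \<rho> x $$ (i, j) \<in> Zinv m"
  by (rule over_ZinvD[OF GL_ZinvD(2)[OF rep_GL] rep_carrier_mat])

lemma rep_upper_triangular:
  assumes "x \<in> carrier (BS m)"
  shows "upper_triangular (\<rho> x)"
proof -
  have "\<rho> x \<in> T_Zinv m n" using special assms unfolding special_rep_def by blast
  then show ?thesis by (simp add: T_Zinv_def)
qed

lemma rep_one: "\<rho> (0, 0) = 1\<^sub>m n"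
  using rep.hom_one by (simp add: GL_group_def)

lemma rep_translation_diag:
  assumes "b \<in> Zinv m" "i < n"
  shows "\<rho> (0, b) $$ (i, i) = 1"
proof -
  have "\<rho> (0, b) \<in> U_Zinv m n"
    using special translation_in_BS_A[OF m_pos assms(1)] unfolding special_rep_def by blast
  then show ?thesis using assms(2) by (simp add: U_Zinv_def)
qed

lemma rep_diag_mult:
  "x \<in> carrier (BS m) \<Longrightarrow> y \<in> carrier (BS m) \<Longrightarrow> i < n \<Longrightarrow>
    \<rho> (x \<otimes>\<^bsub>BS m\<^esub> y) $$ (i, i) = \<rho> x $$ (i, i) * \<rho> y $$ (i, i)"
  by (simp add: GL_group_def upper_triangular_mult_diag[OF rep_carrier_mat rep_carrier_mat
        rep_upper_triangular rep_upper_triangular])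

lemma rep_dilation_diag_nonzero: "i < n \<Longrightarrow> \<rho> (1, 0) $$ (i, i) \<noteq> 0"
  using rep_diag_mult[of "(1, 0)" "(-1, 0)" i] rep_one by auto

lemma rep_diag:
  assumes b: "b \<in> Zinv m" and i: "i < n"
  shows "\<rho> (k, b) $$ (i, i) = (\<rho> (1, 0) $$ (i, i)) powi k"
proof -
  let ?D = "\<rho> (1, 0) $$ (i, i)"
  have step: "\<rho> (k + 1, 0) $$ (i, i) = \<rho> (k, 0) $$ (i, i) * ?D" for k
    using rep_diag_mult[of "(k, 0)" "(1, 0)" i] i by simp
  have "\<rho> (k, 0) $$ (i, i) = ?D powi k"
  proof (induction k rule: int_induct[where k = 0])
    case base
    show ?case using rep_one i by simp
  next
    case (step1 k)
    then show ?case using step[of k] rep_dilation_diag_nonzero[OF i] by (simp add: power_int_add)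
  next
    case (step2 k)
    then show ?case using step[of "k - 1"] rep_dilation_diag_nonzero[OF i]
      by (simp add: power_int_diff field_simps)
  qed
  moreover have "\<rho> (k, b) $$ (i, i) = \<rho> (0, b) $$ (i, i) * \<rho> (k, 0) $$ (i, i)"
    using rep_diag_mult[of "(0, b)" "(k, 0)" i] b i by simp
  ultimately show ?thesis using rep_translation_diag[OF b i] by simp
qed

definition first_superdiagonal :: "nat \<Rightarrow> nat \<Rightarrow> bool" where
  "first_superdiagonal i s \<longleftrightarrow> 0 < s \<and> i + s < n \<and> (\<exists>c\<in>Zinv m. \<rho> (0, c) $$ (i, i + s) \<noteq> 0) \<and>
     (\<forall>c\<in>Zinv m. \<forall>i' l. i' < l \<longrightarrow> l < i' + s \<longrightarrow> l < n \<longrightarrow> \<rho> (0, c) $$ (i', l) = 0)"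

lemma ex_first_superdiagonal: "\<exists>i s. first_superdiagonal i s"
proof -
  have "inj_on \<rho> (carrier (BS m))" using special unfolding special_rep_def by blast
  then have "\<rho> (0, 1) \<noteq> \<rho> (0, 0)" by (auto dest: inj_onD)
  then have "\<rho> (0, 1) \<noteq> 1\<^sub>m n" by (simp add: rep_one)
  moreover have "\<rho> (0, 1) \<in> carrier_mat n n" by (simp add: rep_carrier_mat)
  ultimately obtain i j where ij: "i < n" "j < n" "\<rho> (0, 1) $$ (i, j) \<noteq> 1\<^sub>m n $$ (i, j)"
    by (metis carrier_matD eq_matI index_one_mat(2,3))
  have "i < j"
  proof (rule ccontr)
    assume "\<not> i < j"
    then consider "i = j" | "j < i" by linarith
    then show False
      by cases (use ij rep_translation_diag[of 1 i]
          upper_triangular_below_diag[OF rep_carrier_mat rep_upper_triangular, of "(0, 1)" j i] in simp_all)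
  qed
  define S where "S = {s. 0 < s \<and> (\<exists>i. i + s < n \<and> (\<exists>c\<in>Zinv m. \<rho> (0, c) $$ (i, i + s) \<noteq> 0))}"
  have "j - i \<in> S" unfolding S_def using ij \<open>i < j\<close> by (auto intro!: exI[of _ i] bexI[of _ 1])
  define s where "s = (LEAST s. s \<in> S)"
  have "s \<in> S" unfolding s_def using \<open>j - i \<in> S\<close> by (rule LeastI[of "\<lambda>s. s \<in> S"])
  then obtain i0 where i0: "0 < s" "i0 + s < n" "\<exists>c\<in>Zinv m. \<rho> (0, c) $$ (i0, i0 + s) \<noteq> 0"
    unfolding S_def by blast
  have "\<rho> (0, c) $$ (i', l) = 0" if "c \<in> Zinv m" "i' < l" "l < i' + s" "l < n" for c i' l
  proof (rule ccontr)
    assume "\<rho> (0, c) $$ (i', l) \<noteq> 0"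
    then have "l - i' \<in> S" unfolding S_def using that by (auto intro!: exI[of _ i'] bexI[of _ c])
    then have "s \<le> l - i'" unfolding s_def by (rule Least_le)
    then show False using that by linarith
  qed
  then have "first_superdiagonal i0 s" unfolding first_superdiagonal_def using i0 by blast
  then show ?thesis by blast
qed

context
  fixes i s
  assumes gap: "first_superdiagonal i s"
begin

lemma first_superdiagonal_bounds: "0 < s" "i + s < n"
  using gap unfolding first_superdiagonal_def by blast+

lemma first_superdiagonal_vanishing:
  "c \<in> Zinv m \<Longrightarrow> i' < l \<Longrightarrow> l < i' + s \<Longrightarrow> l < n \<Longrightarrow> \<rho> (0, c) $$ (i', l) = 0"
  using gap unfolding first_superdiagonal_def by blast

lemma first_superdiagonal_mult_entry:
  assumes "x \<in> carrier (BS m)" "y \<in> carrier (BS m)"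
    and "\<And>l. i < l \<Longrightarrow> l < i + s \<Longrightarrow> \<rho> x $$ (i, l) = 0 \<or> \<rho> y $$ (l, i + s) = 0"
  shows "\<rho> (x \<otimes>\<^bsub>BS m\<^esub> y) $$ (i, i + s) =
    \<rho> x $$ (i, i) * \<rho> y $$ (i, i + s) + \<rho> x $$ (i, i + s) * \<rho> y $$ (i + s, i + s)"
  unfolding rep_mult[OF assms(1,2)]
  by (rule upper_triangular_mult_entry_gap[OF rep_carrier_mat[OF assms(1)] rep_carrier_mat[OF assms(2)]
        rep_upper_triangular[OF assms(1)] rep_upper_triangular[OF assms(2)]])
    (use first_superdiagonal_bounds assms(3) in auto)

lemma first_superdiagonal_entry_linear:
  assumes "c \<in> Zinv m"
  shows "\<rho> (0, c) $$ (i, i + s) = c * \<rho> (0, 1) $$ (i, i + s)"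
proof (rule Zinv_additive_imp_linear[OF m_pos _ assms])
  fix a b assume ab: "a \<in> Zinv m" "b \<in> Zinv m"
  note n = first_superdiagonal_bounds(2)
  have "\<rho> ((0, a) \<otimes>\<^bsub>BS m\<^esub> (0, b)) $$ (i, i + s) =
      \<rho> (0, a) $$ (i, i) * \<rho> (0, b) $$ (i, i + s) + \<rho> (0, a) $$ (i, i + s) * \<rho> (0, b) $$ (i + s, i + s)"
    using ab n by (intro first_superdiagonal_mult_entry) (auto intro: first_superdiagonal_vanishing)
  then show "\<rho> (0, a + b) $$ (i, i + s) = \<rho> (0, a) $$ (i, i + s) + \<rho> (0, b) $$ (i, i + s)"
    using ab n by (simp add: rep_translation_diag add.commute)
qed

lemma first_superdiagonal_entry_nonzero: "\<rho> (0, 1) $$ (i, i + s) \<noteq> 0"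
proof -
  obtain c where "c \<in> Zinv m" "\<rho> (0, c) $$ (i, i + s) \<noteq> 0"
    using gap unfolding first_superdiagonal_def by blast
  then show ?thesis using first_superdiagonal_entry_linear by force
qed

lemma first_superdiagonal_diag_ratio: "\<rho> (1, 0) $$ (i, i) = of_nat m * \<rho> (1, 0) $$ (i + s, i + s)"
proof -
  note n = first_superdiagonal_bounds(2)
  let ?T = "\<lambda>a b. \<rho> (1, 0) $$ (a, b)" and ?x0 = "\<rho> (0, 1) $$ (i, i + s)"
  have "\<rho> ((1, 0) \<otimes>\<^bsub>BS m\<^esub> (0, 1)) $$ (i, i + s) = ?T i i * ?x0 + ?T i (i + s)"
    using n by (subst first_superdiagonal_mult_entry)
      (auto simp: first_superdiagonal_vanishing rep_translation_diag)
  moreover have "\<rho> ((0, of_nat m) \<otimes>\<^bsub>BS m\<^esub> (1, 0)) $$ (i, i + s) = ?T i (i + s) + of_nat m * ?x0 * ?T (i + s) (i + s)"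
    using n by (subst first_superdiagonal_mult_entry)
      (auto simp: first_superdiagonal_vanishing rep_translation_diag
        first_superdiagonal_entry_linear[of "of_nat m"])
  moreover have "(1, 0) \<otimes>\<^bsub>BS m\<^esub> (0, 1) = (0, of_nat m) \<otimes>\<^bsub>BS m\<^esub> (1, 0)" by simp
  ultimately have "?T i i * ?x0 = of_nat m * ?x0 * ?T (i + s) (i + s)" by simp
  then show ?thesis using first_superdiagonal_entry_nonzero by simp
qed

lemma first_superdiagonal_cong_exponent:
  assumes "b \<in> Zinv m" "\<rho> (k, b) \<in> cong_subgroup m n (GL_Zinv m n) N"
    and "j > 0" "(m ^ j - 1) dvd N" "coprime N m"
  shows "int j dvd k"
proof -
  note n = first_superdiagonal_bounds(2)
  let ?D = "\<rho> (1, 0) $$ (i, i)" and ?E = "\<rho> (1, 0) $$ (i + s, i + s)"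
  have diag_cong: "cong_Zinv m N (\<rho> (1, 0) $$ (l, l) powi k) 1" if "l < n" for l
  proof -
    have "cong_Zinv m N (\<rho> (k, b) $$ (l, l)) (1\<^sub>m n $$ (l, l))"
      using assms(2) that unfolding cong_subgroup_altdef mat_cong_Zinv_def by blast
    then show ?thesis using that by (simp add: rep_diag[OF assms(1) that])
  qed
  have E_inv: "?E powi (- k) \<in> Zinv m"
    using rep_diag[OF Zinv_0 n, of "- k"] rep_entry_Zinv[of "(- k, 0)" "i + s" "i + s"] n by simp
  have "cong_Zinv m N (?D powi k * ?E powi (- k)) (1 * ?E powi (- k))"
    by (rule cong_Zinv_mult[OF m_pos Zinv_1 E_inv diag_cong cong_Zinv_refl]) (use n in simp)
  moreover have "cong_Zinv m N (?E powi (- k) * 1) (?E powi (- k) * ?E powi k)"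
    by (rule cong_Zinv_mult[OF m_pos E_inv Zinv_1 cong_Zinv_refl cong_Zinv_sym[OF diag_cong]])
      (use n in simp)
  ultimately have "cong_Zinv m N (?D powi k * ?E powi (- k)) (?E powi (- k) * ?E powi k)"
    using cong_Zinv_trans[OF m_pos] by simp
  moreover have "?E powi (- k) * ?E powi k = 1"
    using rep_dilation_diag_nonzero[OF n] by (simp add: power_int_minus)
  moreover have "?D powi k * ?E powi (- k) = of_nat m powi k"
    using rep_dilation_diag_nonzero[OF n]
    by (simp add: first_superdiagonal_diag_ratio power_int_mult_distrib power_int_minus)
  ultimately have "cong_Zinv m N (of_nat m powi k) 1" by simp
  then show ?thesis by (rule dvd_exponent_if_cong_Zinv_power_one[OF m_ge_2 assms(3-5)])
qed

lemma first_superdiagonal_cong_translation: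
  assumes "b \<in> Zinv m" "\<rho> (k, b) \<in> cong_subgroup m n (GL_Zinv m n) N'"
    and "of_nat p / \<rho> (0, 1) $$ (i, i + s) \<in> Zinv m" "N * (m - 1) * p dvd N'"
  shows "\<exists>z\<in>Zinv m. b = of_nat N * z"
proof -
  let ?K = "cong_subgroup m n (GL_Zinv m n) N'" and ?x0 = "\<rho> (0, 1) $$ (i, i + s)"
  have K: "?K \<lhd> GL_group m n" by (rule normal_cong_subgroup_GL[OF m_pos])
  note n = first_superdiagonal_bounds
  have x: "(k, b) \<in> carrier (BS m)" and t: "(1 :: int, 0 :: rat) \<in> carrier (BS m)"
    using assms(1) by simp_all
  have hom: "\<rho> (a \<otimes>\<^bsub>BS m\<^esub> c \<otimes>\<^bsub>BS m\<^esub> inv\<^bsub>BS m\<^esub> a \<otimes>\<^bsub>BS m\<^esub> inv\<^bsub>BS m\<^esub> c) =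
      \<rho> a \<otimes>\<^bsub>GL_group m n\<^esub> \<rho> c \<otimes>\<^bsub>GL_group m n\<^esub> inv\<^bsub>GL_group m n\<^esub> \<rho> a
        \<otimes>\<^bsub>GL_group m n\<^esub> inv\<^bsub>GL_group m n\<^esub> \<rho> c"
    if "a \<in> carrier (BS m)" "c \<in> carrier (BS m)" for a c
    using that by simp
  have sub: "subgroup ?K (GL_group m n)" by (rule normal_imp_subgroup[OF K])
  have "\<rho> (1, 0) \<otimes>\<^bsub>GL_group m n\<^esub> \<rho> (k, b) \<otimes>\<^bsub>GL_group m n\<^esub> inv\<^bsub>GL_group m n\<^esub> \<rho> (1, 0) \<in> ?K"
    by (rule normal.inv_op_closed2[OF K rep.hom_closed[OF t] assms(2)])
  moreover have "inv\<^bsub>GL_group m n\<^esub> \<rho> (k, b) \<in> ?K"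
    by (rule subgroup.m_inv_closed[OF sub assms(2)])
  ultimately have "\<rho> (1, 0) \<otimes>\<^bsub>GL_group m n\<^esub> \<rho> (k, b) \<otimes>\<^bsub>GL_group m n\<^esub> inv\<^bsub>GL_group m n\<^esub> \<rho> (1, 0)
      \<otimes>\<^bsub>GL_group m n\<^esub> inv\<^bsub>GL_group m n\<^esub> \<rho> (k, b) \<in> ?K"
    by (rule subgroup.m_closed[OF sub])
  then have "\<rho> ((1, 0) \<otimes>\<^bsub>BS m\<^esub> (k, b) \<otimes>\<^bsub>BS m\<^esub> inv\<^bsub>BS m\<^esub> (1, 0) \<otimes>\<^bsub>BS m\<^esub> inv\<^bsub>BS m\<^esub> (k, b)) \<in> ?K"
    by (simp only: hom[OF t x])
  then have "\<rho> (0, (of_nat m - 1) * b) \<in> ?K" by (simp only: commutator_BS[OF m_pos assms(1)])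
  then have "mat_cong_Zinv m n N' (\<rho> (0, (of_nat m - 1) * b)) (1\<^sub>m n)"
    unfolding cong_subgroup_altdef by blast
  then have "cong_Zinv m N' (\<rho> (0, (of_nat m - 1) * b) $$ (i, i + s)) (1\<^sub>m n $$ (i, i + s))"
    using n(2) add_lessD1[OF n(2)] unfolding mat_cong_Zinv_def by blast
  then obtain w where w: "w \<in> Zinv m" "\<rho> (0, (of_nat m - 1) * b) $$ (i, i + s) = of_nat N' * w"
    using n unfolding cong_Zinv_def by auto
  have "(of_nat m - 1) * b \<in> Zinv m" using assms(1) m_pos by (intro Zinv_mult Zinv_diff) simp_all
  then have eq: "(of_nat m - 1) * b * ?x0 = of_nat N' * w"
    using w(2) by (simp only: first_superdiagonal_entry_linear)
  obtain q where q: "N' = N * (m - 1) * p * q" using assms(4) by (auto elim: dvdE)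
  have "of_nat (m - 1) = (of_nat m - 1 :: rat)" using m_pos by (simp add: of_nat_diff)
  then have "(of_nat m - 1) * (b * ?x0) = (of_nat m - 1) * (of_nat N * of_nat p * of_nat q * w)"
    using eq unfolding q by (simp add: algebra_simps)
  then have "b * ?x0 = of_nat N * of_nat p * of_nat q * w" using m_ge_2 by simp
  then have "b = of_nat N * (of_nat p / ?x0 * of_nat q * w)"
    using first_superdiagonal_entry_nonzero by (simp add: field_simps)
  moreover have "of_nat p / ?x0 * of_nat q * w \<in> Zinv m"
    using assms(3) w(1) by (intro Zinv_mult) simp_all
  ultimately show ?thesis by blast
qed

end

lemma ex_congruence_level:
  assumes "j > 0" "N > 0" "coprime N m"
  shows "\<exists>N'>0. coprime N' m \<and> (\<forall>k b. b \<in> Zinv m \<longrightarrow> \<rho> (k, b) \<in> cong_subgroup m n (GL_Zinv m n) N' \<longrightarrow>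
    int j dvd k \<and> (\<exists>z\<in>Zinv m. b = of_nat N * z))"
proof -
  obtain i s where gap: "first_superdiagonal i s" using ex_first_superdiagonal by blast
  then have "i + s < n" by (rule first_superdiagonal_bounds)
  then obtain p where p: "p > 0" "coprime p m" "of_nat p / \<rho> (0, 1) $$ (i, i + s) \<in> Zinv m"
    using ex_coprime_mult_inverse_Zinv[OF m_pos rep_entry_Zinv first_superdiagonal_entry_nonzero[OF gap]] by auto
  \<comment> \<open>\<open>m\<^sup>j - 1\<close> controls the exponent of \<open>t\<close>; \<open>(m - 1) p\<close> lets us divide the commutator entry
    \<open>(m - 1) b x\<^sub>0\<close> back down to \<open>b\<close>.\<close>
  define N' where "N' = N * (m - 1) * p * (m ^ j - 1)"
  have "m ^ j \<ge> m" using assms(1) m_pos by (simp add: self_le_power)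
  then have "N' > 0" unfolding N'_def using assms(2) p(1) m_ge_2 by simp
  moreover have "coprime N' m"
    unfolding N'_def using assms(3) p(2) m_pos coprime_diff_one_left_nat[of m]
      coprime_diff_one_left_nat[of "m ^ j"] assms(1) by (simp add: coprime_power_right_iff)
  moreover have "int j dvd k \<and> (\<exists>z\<in>Zinv m. b = of_nat N * z)"
    if "b \<in> Zinv m" "\<rho> (k, b) \<in> cong_subgroup m n (GL_Zinv m n) N'" for k b
    using first_superdiagonal_cong_exponent[OF gap that assms(1)]
      first_superdiagonal_cong_translation[OF gap that p(3), of N] calculation(2)
    unfolding N'_def by simp
  ultimately show ?thesis by blast
qed

lemma finite_index_contains_congruence_part:
  assumes "subgroup H ((GL_group m n)\<lparr>carrier := \<rho> ` carrier (BS m)\<rparr>)"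
    and "finite {H #>\<^bsub>GL_group m n\<^esub> g | g. g \<in> \<rho> ` carrier (BS m)}"
  shows "\<exists>j>0. \<exists>N>0. coprime N m \<and> (\<forall>k z. int j dvd k \<longrightarrow> z \<in> Zinv m \<longrightarrow> \<rho> (k, of_nat N * z) \<in> H)"
proof -
  let ?G = "(GL_group m n)\<lparr>carrier := \<rho> ` carrier (BS m)\<rparr>"
  interpret G: group ?G
    by (rule subgroup.subgroup_is_group[OF rep.img_is_subgroup group_GL_group[OF m_pos]])
  interpret rep_image: group_hom "BS m" ?G \<rho>
    by (intro group_hom.intro group_hom_axioms.intro group_BS[OF m_pos] G.is_group)
      (auto simp: hom_def)
  let ?K = "carrier (BS m) \<inter> \<rho> -` H"
  have K: "subgroup ?K (BS m)" by (rule rep_image.subgroup_vimage[OF assms(1)])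
  have "rcosets\<^bsub>?G\<^esub> H = {H #>\<^bsub>GL_group m n\<^esub> g | g. g \<in> \<rho> ` carrier (BS m)}"
    unfolding RCOSETS_def r_coset_def by auto
  then have fin: "finite (rcosets\<^bsub>?G\<^esub> H)" using assms(2) by simp
  have power_in_K: "\<exists>j::nat>0. x [^]\<^bsub>BS m\<^esub> j \<in> ?K" if "x \<in> carrier (BS m)" for x
  proof -
    have "\<rho> x \<in> carrier ?G" using that by simp
    then obtain j :: nat where "j > 0" "\<rho> x [^]\<^bsub>?G\<^esub> j \<in> H"
      using G.ex_pow_in_subgroup_of_finite_index[OF assms(1) fin] by blast
    then show ?thesis using that by (auto simp: rep_image.hom_nat_pow)
  qed
  obtain j :: nat where j: "j > 0" "(1, 0) [^]\<^bsub>BS m\<^esub> j \<in> ?K" using power_in_K[of "(1, 0)"] by auto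
  obtain c :: nat where c: "c > 0" "(0, 1) [^]\<^bsub>BS m\<^esub> c \<in> ?K" using power_in_K[of "(0, 1)"] by auto
  have "(int j, 0) \<in> ?K" "(0, of_nat c) \<in> ?K"
    using j(2) c(2) pow_BS_dilation[OF m_pos, of 1 "int j"] pow_BS_translation[OF m_pos Zinv_1, of "int c"]
    by (simp_all add: int_pow_int)
  then show ?thesis
    using BS_subgroup_contains_congruence_part[OF m_pos K j(1) _ c(1)] j(1) by blast
qed

lemma finite_index_subgroup_contains_cong_subgroup:
  assumes "subgroup H ((GL_group m n)\<lparr>carrier := \<rho> ` carrier (BS m)\<rparr>)"
    and "finite {H #>\<^bsub>GL_group m n\<^esub> g | g. g \<in> \<rho> ` carrier (BS m)}"
  shows "\<exists>N'>0. coprime N' m \<and> cong_subgroup m n (\<rho> ` carrier (BS m)) N' \<subseteq> H"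
proof -
  obtain j N where "j > 0" "N > 0" "coprime N m"
    and H: "\<And>k z. int j dvd k \<Longrightarrow> z \<in> Zinv m \<Longrightarrow> \<rho> (k, of_nat N * z) \<in> H"
    using finite_index_contains_congruence_part[OF assms] by blast
  obtain N' where "N' > 0" "coprime N' m"
    and level: "\<And>k b. b \<in> Zinv m \<Longrightarrow> \<rho> (k, b) \<in> cong_subgroup m n (GL_Zinv m n) N' \<Longrightarrow>
      int j dvd k \<and> (\<exists>z\<in>Zinv m. b = of_nat N * z)"
    using ex_congruence_level[OF \<open>j > 0\<close> \<open>N > 0\<close> \<open>coprime N m\<close>] by blast
  have "cong_subgroup m n (\<rho> ` carrier (BS m)) N' \<subseteq> H"
  proof
    fix A assume "A \<in> cong_subgroup m n (\<rho> ` carrier (BS m)) N'"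
    then obtain k b where "b \<in> Zinv m" and A: "A = \<rho> (k, b)"
      and "mat_cong_Zinv m n N' A (1\<^sub>m n)"
      unfolding cong_subgroup_altdef by force
    then have "\<rho> (k, b) \<in> cong_subgroup m n (GL_Zinv m n) N'"
      unfolding cong_subgroup_altdef using rep_GL by simp
    then obtain z where "int j dvd k" "z \<in> Zinv m" "b = of_nat N * z"
      using level \<open>b \<in> Zinv m\<close> by blast
    then show "A \<in> H" using H A by simp
  qed
  with \<open>N' > 0\<close> \<open>coprime N' m\<close> show ?thesis by blast
qed

end

theorem proposition4p7:
  fixes m n :: nat and \<rho> :: "int \<times> rat \<Rightarrow> rat mat"
  assumes "m \<ge> 2" and "n \<ge> 1" and "special_rep m n \<rho>"
  shows "has_CSP m n (\<rho> ` carrier (BS m))"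
proof -
  interpret special_representation m n \<rho> using assms(1,3) by unfold_locales
  show ?thesis
    unfolding has_CSP_def using finite_index_subgroup_contains_cong_subgroup by blast
qed

end
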